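(* In the setting below, the function $f\mapsto \mathcal L(f)$ is concave on $[0,\infty)^{n\times p}$.
   Context: Let $M=(m_{ij})\in\{0,1\}^{n\times p}$, $m_i=\sum_jm_{ij}\ge1$ for all $i$, $m=\sum_im_i$, and fix constants $\hat\sigma_{1,j}>0$ ($j=1,\dots,p$), $\hat\sigma_2>0$. For $0<b<c$ and $q_1,q_2>0$ with $q_1\tanh(q_2(c-b))=b$, let $d=b^2/2+(q_1/q_2)\ln\cosh(q_2(c-b))$ and define $\rho_{b,c}(z)=z^2/2$ if $|z|\le b$, $\rho_{b,c}(z)=d-(q_1/q_2)\ln\cosh(q_2(c-|z|))$ if $b\le|z|\le c$, $\rho_{b,c}(z)=d$ if $|z|\ge c$. Let $\rho_1=\rho_{b_1,c_1}$, $\rho_2=\rho_{b_2,c_2}$ (each with its own admissible constants) and $h_k(z)=\rho_k(\sqrt z)$ for $z\ge0$. For $f=(f_{ij})\in[0,\infty)^{n\times p}$ define $$\mathcal L(f)=\frac{\hat\sigma_2^2}{m}\sum_{i=1}^n m_i\,h_2\!\Big(\frac{1}{m_i\hat\sigma_2^2}\sum_{j=1}^p m_{ij}\hat\sigma_{1,j}^2\,h_1\big(f_{ij}/\hat\sigma_{1,j}^2\big)\Big).$$ (With $f_{ij}=r_{ij}^2$ this is the cellPCA objective $\frac{\hat\sigma_2^2}{m}\sum_i m_i\rho_2(\mathrm{rt}_i/\hat\sigma_2)$, $\mathrm{rt}_i=\sqrt{\frac1{m_i}\sum_jm_{ij}\hat\sigma_{1,j}^2\rho_1(r_{ij}/\hat\sigma_{1,j})}$.)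 *)

theory Defs
  imports "HOL-Analysis.Analysis"
begin

definition rho_admissible :: "real \<Rightarrow> real \<Rightarrow> real \<Rightarrow> real \<Rightarrow> bool" where
  "rho_admissible b c q1 q2 \<longleftrightarrow>
     0 < b \<and> b < c \<and> 0 < q1 \<and> 0 < q2 \<and> q1 * tanh (q2 * (c - b)) = b"

definition rho_d :: "real \<Rightarrow> real \<Rightarrow> real \<Rightarrow> real \<Rightarrow> real" where
  "rho_d b c q1 q2 = b\<^sup>2 / 2 + (q1 / q2) * ln (cosh (q2 * (c - b)))"

definition rho :: "real \<Rightarrow> real \<Rightarrow> real \<Rightarrow> real \<Rightarrow> real \<Rightarrow> real" where
  "rho b c q1 q2 z =
     (if \<bar>z\<bar> \<le> b then z\<^sup>2 / 2
      else if \<bar>z\<bar> \<le> c then rho_d b c q1 q2 - (q1 / q2) * ln (cosh (q2 * (c - \<bar>z\<bar>)))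
      else rho_d b c q1 q2)"

definition hfun :: "real \<Rightarrow> real \<Rightarrow> real \<Rightarrow> real \<Rightarrow> real \<Rightarrow> real" where
  "hfun b c q1 q2 z = rho b c q1 q2 (sqrt z)"

definition cellL ::
  "(real \<Rightarrow> real) \<Rightarrow> (real \<Rightarrow> real) \<Rightarrow> real^'p^'n \<Rightarrow> ('p \<Rightarrow> real) \<Rightarrow> real
     \<Rightarrow> real^'p^'n \<Rightarrow> real" where
  "cellL h1 h2 M s1 s2 f =
     (let mi = (\<lambda>i. \<Sum>j\<in>UNIV. M $ i $ j);
          m = (\<Sum>i\<in>UNIV. mi i)
      in s2\<^sup>2 / m * (\<Sum>i\<in>UNIV. mi i *
            h2 (1 / (mi i * s2\<^sup>2) * (\<Sum>j\<in>UNIV. M $ i $ j * (s1 j)\<^sup>2 * h1 (f $ i $ j / (s1 j)\<^sup>2)))))"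

end

theory Submission
  imports Defs
begin

text \<open>The function h(z) = rho(sqrt z) is concave and nondecreasing on [0, \<infinity>): its derivative is
  1/2 on [0, b^2], q1 tanh(q2 (c - sqrt z)) / (2 sqrt z) on [b^2, c^2] and 0 beyond c^2. The middle
  piece decreases from 1/2 to 0, matching at b^2 precisely because q1 tanh(q2 (c - b)) = b, so the
  derivative is nonincreasing. The objective is a nonnegative combination of h2 applied to
  nonnegative combinations of h1 of the coordinates of f; a concave function of a linear map is
  concave, and so is a nondecreasing concave function of a concave one.\<close>

lemma concave_on_cong:
  assumes "concave_on S f" "\<And>x. x \<in> S \<Longrightarrow> f x = g x"
  shows "concave_on S g"
  using assms by (auto simp: concave_on_iff convex_def)

lemma concave_on_linear:
  fixes f :: "'a::real_vector \<Rightarrow> real"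
  assumes "linear f" "convex S"
  shows "concave_on S f"
  using assms by (simp add: concave_on_iff linear_add linear_scale)

lemma concave_on_weighted_sum:
  assumes "finite I" "convex S" "\<And>k. k \<in> I \<Longrightarrow> 0 \<le> w k"
    and "\<And>k. k \<in> I \<Longrightarrow> concave_on S (g k)"
  shows "concave_on S (\<lambda>x. \<Sum>k\<in>I. w k * g k x)"
  using assms
proof (induction I rule: finite_induct)
  case empty
  then show ?case by (simp add: concave_on_const)
next
  case (insert k I)
  then show ?case by (simp add: concave_on_add concave_on_cmul)
qed

lemma concave_on_compose_mono:
  assumes f: "concave_on S f" and g: "concave_on T g" "mono_on T g"
    and image: "f ` S \<subseteq> T"
  shows "concave_on S (\<lambda>x. g (f x))"
  unfolding concave_on_iff
proof (intro conjI ballI allI impI)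
  show "convex S" using f by (rule concave_on_imp_convex)
  fix x y and u v :: real
  assume xy: "x \<in> S" "y \<in> S" and uv: "0 \<le> u" "0 \<le> v" "u + v = 1"
  have fxy: "f x \<in> T" "f y \<in> T" using image xy by auto
  have z: "u *\<^sub>R x + v *\<^sub>R y \<in> S"
    using \<open>convex S\<close> xy uv by (auto simp: convex_def)
  have w: "u * f x + v * f y \<in> T"
    using concave_on_imp_convex[OF g(1)] fxy uv by (auto simp: convex_def)
  have "u * g (f x) + v * g (f y) \<le> g (u * f x + v * f y)"
    using g(1) fxy uv by (auto simp: concave_on_iff)
  also have "\<dots> \<le> g (f (u *\<^sub>R x + v *\<^sub>R y))"
  proof (rule mono_onD[OF g(2) w])
    show "f (u *\<^sub>R x + v *\<^sub>R y) \<in> T" using image z by auto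
    show "u * f x + v * f y \<le> f (u *\<^sub>R x + v *\<^sub>R y)"
      using f xy uv by (auto simp: concave_on_iff)
  qed
  finally show "u * g (f x) + v * g (f y) \<le> g (f (u *\<^sub>R x + v *\<^sub>R y))" .
qed

lemma has_real_derivative_at_split:
  assumes "(f has_real_derivative D) (at a within {..a})"
    and "(f has_real_derivative D) (at a within {a..})"
  shows "(f has_real_derivative D) (at a)"
  using assms unfolding has_field_derivative_iff by (rule Lim_Un_univ) (auto simp: linorder_linear)

definition rho_sqrt_mid :: "real \<Rightarrow> real \<Rightarrow> real \<Rightarrow> real \<Rightarrow> real \<Rightarrow> real" where
  "rho_sqrt_mid b c q1 q2 z = rho_d b c q1 q2 - (q1 / q2) * ln (cosh (q2 * (c - sqrt z)))"

definition rho_sqrt_mid' :: "real \<Rightarrow> real \<Rightarrow> real \<Rightarrow> real \<Rightarrow> real" where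
  "rho_sqrt_mid' c q1 q2 z = q1 * tanh (q2 * (c - sqrt z)) / (2 * sqrt z)"

text \<open>Continuing the linear piece z/2 to negative z gives a function that is differentiable and
  concave on all of \<real>; hfun itself equals |z|/2 for z < 0.\<close>

definition hfun_ext :: "real \<Rightarrow> real \<Rightarrow> real \<Rightarrow> real \<Rightarrow> real \<Rightarrow> real" where
  "hfun_ext b c q1 q2 z =
     (if z \<le> b\<^sup>2 then z / 2 else if z \<le> c\<^sup>2 then rho_sqrt_mid b c q1 q2 z else rho_d b c q1 q2)"

definition hfun_ext' :: "real \<Rightarrow> real \<Rightarrow> real \<Rightarrow> real \<Rightarrow> real \<Rightarrow> real" where
  "hfun_ext' b c q1 q2 z =
     (if z \<le> b\<^sup>2 then 1 / 2 else if z \<le> c\<^sup>2 then rho_sqrt_mid' c q1 q2 z else 0)"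

context
  fixes b c q1 q2 :: real
  assumes adm: "rho_admissible b c q1 q2"
begin

lemma admissible: "0 < b" "b < c" "0 < q1" "0 < q2" "q1 * tanh (q2 * (c - b)) = b"
  using adm unfolding rho_admissible_def by auto

lemma breakpoints_sq: "0 < b\<^sup>2" "b\<^sup>2 < c\<^sup>2"
  using admissible by (auto intro: power_strict_mono)

lemma rho_sqrt_mid_deriv:
  assumes "0 < z"
  shows "(rho_sqrt_mid b c q1 q2 has_real_derivative rho_sqrt_mid' c q1 q2 z) (at z)"
  unfolding rho_sqrt_mid_def[abs_def] rho_sqrt_mid'_def using assms admissible
  by (auto intro!: derivative_eq_intros simp: tanh_def field_simps)

lemma rho_sqrt_mid_breakpoints:
  "rho_sqrt_mid b c q1 q2 (b\<^sup>2) = b\<^sup>2 / 2" "rho_sqrt_mid b c q1 q2 (c\<^sup>2) = rho_d b c q1 q2"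
  "rho_sqrt_mid' c q1 q2 (b\<^sup>2) = 1 / 2" "rho_sqrt_mid' c q1 q2 (c\<^sup>2) = 0"
  using admissible by (simp_all add: rho_sqrt_mid_def rho_sqrt_mid'_def rho_d_def)

lemma rho_sqrt_mid'_antimono:
  assumes "b\<^sup>2 \<le> x" "x \<le> y" "y \<le> c\<^sup>2"
  shows "rho_sqrt_mid' c q1 q2 y \<le> rho_sqrt_mid' c q1 q2 x"
proof -
  have "b \<le> sqrt x" "sqrt x \<le> sqrt y" "sqrt y \<le> c"
    using assms admissible real_sqrt_le_mono[of y "c\<^sup>2"] by (auto simp: real_le_rsqrt)
  then have sqrt_bounds: "b \<le> sqrt x" "sqrt x \<le> sqrt y" "sqrt y \<le> c" "sqrt x \<le> c"
    by linarith+
  then have "0 \<le> tanh (q2 * (c - sqrt y))" "0 \<le> tanh (q2 * (c - sqrt x))"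
    "tanh (q2 * (c - sqrt y)) \<le> tanh (q2 * (c - sqrt x))"
    using admissible by (simp_all add: tanh_real_nonneg_iff tanh_real_le_iff)
  moreover have "0 < sqrt x" using sqrt_bounds admissible by linarith
  ultimately have "q1 * tanh (q2 * (c - sqrt y)) / (2 * sqrt y) \<le> q1 * tanh (q2 * (c - sqrt x)) / (2 * sqrt x)"
    using sqrt_bounds admissible by (intro frac_le mult_left_mono) auto
  then show ?thesis by (simp add: rho_sqrt_mid'_def)
qed

lemma rho_sqrt_mid'_nonneg:
  assumes "b\<^sup>2 \<le> z" "z \<le> c\<^sup>2"
  shows "0 \<le> rho_sqrt_mid' c q1 q2 z"
  using rho_sqrt_mid'_antimono[of z "c\<^sup>2"] assms rho_sqrt_mid_breakpoints by simp

lemma hfun_ext'_bounds: "0 \<le> hfun_ext' b c q1 q2 z" "hfun_ext' b c q1 q2 z \<le> 1 / 2"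
  using rho_sqrt_mid'_nonneg[of z] rho_sqrt_mid'_antimono[of "b\<^sup>2" z] rho_sqrt_mid_breakpoints
  by (auto simp: hfun_ext'_def)

lemma hfun_ext'_antimono:
  assumes "x \<le> y"
  shows "hfun_ext' b c q1 q2 y \<le> hfun_ext' b c q1 q2 x"
proof -
  consider "x \<le> b\<^sup>2" | "c\<^sup>2 < y" | "b\<^sup>2 < x" "y \<le> c\<^sup>2" by linarith
  then show ?thesis
  proof cases
    case 1
    then show ?thesis using hfun_ext'_bounds(2)[of y] by (simp add: hfun_ext'_def)
  next
    case 2
    then show ?thesis using hfun_ext'_bounds(1)[of x] breakpoints_sq by (simp add: hfun_ext'_def)
  next
    case 3
    then show ?thesis using assms rho_sqrt_mid'_antimono[of x y] by (simp add: hfun_ext'_def)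
  qed
qed

lemma hfun_ext_deriv: "(hfun_ext b c q1 q2 has_real_derivative hfun_ext' b c q1 q2 z) (at z)"
proof -
  let ?h = "hfun_ext b c q1 q2" and ?mid = "rho_sqrt_mid b c q1 q2" and ?d = "rho_d b c q1 q2"
  have lin: "((\<lambda>x. x / 2) has_real_derivative 1 / 2) (at x within T)" for x :: real and T
    by (auto intro!: derivative_eq_intros)
  have const: "((\<lambda>x. ?d) has_real_derivative 0) (at x within T)" for x :: real and T
    by simp
  have mid: "(?mid has_real_derivative rho_sqrt_mid' c q1 q2 x) (at x within T)" if "0 < x" for x T
    using rho_sqrt_mid_deriv[OF that] by (rule has_field_derivative_at_within)
  note sq = breakpoints_sq rho_sqrt_mid_breakpoints
  have gap: "0 < c\<^sup>2 - b\<^sup>2" using sq by simp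
  consider "z < b\<^sup>2" | "z = b\<^sup>2" | "b\<^sup>2 < z" "z < c\<^sup>2" | "z = c\<^sup>2" | "c\<^sup>2 < z"
    by linarith
  then show ?thesis
  proof cases
    case 1
    show ?thesis
      by (rule DERIV_cong[OF has_field_derivative_transform_within_open[OF lin, where S="{..<b\<^sup>2}"]])
        (use 1 in \<open>auto simp: hfun_ext_def hfun_ext'_def\<close>)
  next
    case 2
    show ?thesis
    proof (rule has_real_derivative_at_split)
      show "(?h has_real_derivative hfun_ext' b c q1 q2 z) (at z within {..z})"
        by (rule DERIV_cong[OF has_field_derivative_transform_within[OF lin zero_less_one]])
          (use 2 in \<open>auto simp: hfun_ext_def hfun_ext'_def\<close>)
      show "(?h has_real_derivative hfun_ext' b c q1 q2 z) (at z within {z..})"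
        by (rule DERIV_cong[OF has_field_derivative_transform_within[OF mid gap]])
          (use 2 sq in \<open>auto simp: hfun_ext_def hfun_ext'_def dist_real_def\<close>)
    qed
  next
    case 3
    have "0 < z" using 3 breakpoints_sq by linarith
    show ?thesis
      by (rule DERIV_cong[OF has_field_derivative_transform_within_open[OF mid, where S="{b\<^sup>2<..<c\<^sup>2}"]])
        (use 3 \<open>0 < z\<close> in \<open>auto simp: hfun_ext_def hfun_ext'_def\<close>)
  next
    case 4
    show ?thesis
    proof (rule has_real_derivative_at_split)
      show "(?h has_real_derivative hfun_ext' b c q1 q2 z) (at z within {..z})"
        by (rule DERIV_cong[OF has_field_derivative_transform_within[OF mid gap]])
          (use 4 sq in \<open>auto simp: hfun_ext_def hfun_ext'_def dist_real_def\<close>)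
      show "(?h has_real_derivative hfun_ext' b c q1 q2 z) (at z within {z..})"
        by (rule DERIV_cong[OF has_field_derivative_transform_within[OF const zero_less_one]])
          (use 4 sq in \<open>auto simp: hfun_ext_def hfun_ext'_def\<close>)
    qed
  next
    case 5
    show ?thesis
      by (rule DERIV_cong[OF has_field_derivative_transform_within_open[OF const, where S="{c\<^sup>2<..}"]])
        (use 5 sq in \<open>auto simp: hfun_ext_def hfun_ext'_def\<close>)
  qed
qed

lemma concave_on_hfun_ext: "concave_on UNIV (hfun_ext b c q1 q2)"
  unfolding concave_on_def
  by (rule convex_on_realI[where f'="\<lambda>z. - hfun_ext' b c q1 q2 z"])
    (auto intro: DERIV_minus hfun_ext_deriv hfun_ext'_antimono)

lemma mono_hfun_ext: "mono (hfun_ext b c q1 q2)"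
proof (rule monoI)
  show "hfun_ext b c q1 q2 x \<le> hfun_ext b c q1 q2 y" if "x \<le> y" for x y
    using that by (rule DERIV_nonneg_imp_nondecreasing) (metis hfun_ext_deriv hfun_ext'_bounds(1))
qed

lemma hfun_eq_hfun_ext:
  assumes "0 \<le> z"
  shows "hfun b c q1 q2 z = hfun_ext b c q1 q2 z"
proof -
  have "sqrt z \<le> b \<longleftrightarrow> z \<le> b\<^sup>2" "sqrt z \<le> c \<longleftrightarrow> z \<le> c\<^sup>2"
    using real_sqrt_le_iff[of z "b\<^sup>2"] real_sqrt_le_iff[of z "c\<^sup>2"] admissible by simp_all
  then show ?thesis
    using assms by (simp add: hfun_def rho_def hfun_ext_def rho_sqrt_mid_def)
qed

lemma concave_on_hfun: "concave_on {0..} (hfun b c q1 q2)"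
proof (rule concave_on_cong)
  show "concave_on {0..} (hfun_ext b c q1 q2)"
    using concave_on_hfun_ext unfolding concave_on_def by (rule convex_on_subset) auto
qed (simp add: hfun_eq_hfun_ext)

lemma mono_on_hfun: "mono_on {0..} (hfun b c q1 q2)"
  by (intro mono_onI) (simp add: hfun_eq_hfun_ext monoD[OF mono_hfun_ext])

lemma hfun_nonneg:
  assumes "0 \<le> z"
  shows "0 \<le> hfun b c q1 q2 z"
proof -
  have "hfun b c q1 q2 0 = 0" using admissible by (simp add: hfun_def rho_def)
  then show ?thesis using mono_onD[OF mono_on_hfun, of 0 z] assms by simp
qed

end

theorem lemma2:
  fixes M :: "real^'p^'n" and s1 :: "'p \<Rightarrow> real" and s2 :: real
    and b1 c1 q11 q12 b2 c2 q21 q22 :: real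
  assumes M01: "\<forall>i j. M $ i $ j \<in> {0, 1}"
    and rows: "\<forall>i. (\<Sum>j\<in>UNIV. M $ i $ j) \<ge> 1"
    and s1_pos: "\<forall>j. s1 j > 0"
    and s2_pos: "s2 > 0"
    and adm1: "rho_admissible b1 c1 q11 q12"
    and adm2: "rho_admissible b2 c2 q21 q22"
  shows "concave_on {f :: real^'p^'n. \<forall>i j. 0 \<le> f $ i $ j}
           (cellL (hfun b1 c1 q11 q12) (hfun b2 c2 q21 q22) M s1 s2)"
proof -
  let ?S = "{f :: real^'p^'n. \<forall>i j. 0 \<le> f $ i $ j}"
  let ?h1 = "hfun b1 c1 q11 q12" and ?h2 = "hfun b2 c2 q21 q22"
  define inner where "inner i f = (\<Sum>j\<in>UNIV. M $ i $ j * (s1 j)\<^sup>2 * ?h1 (f $ i $ j / (s1 j)\<^sup>2))"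
    for i and f :: "real^'p^'n"
  have M_nonneg: "0 \<le> M $ i $ j" for i j
    using M01[rule_format, of i j] by auto
  have row_sum_nonneg: "0 \<le> (\<Sum>j\<in>UNIV. M $ i $ j)" for i by (simp add: M_nonneg sum_nonneg)
  have convex_S: "convex ?S" by (auto simp: convex_def)
  have "concave_on ?S (\<lambda>f. ?h1 (f $ i $ j / (s1 j)\<^sup>2))" for i j
    by (rule concave_on_compose_mono[OF concave_on_linear[OF _ convex_S]
          concave_on_hfun[OF adm1] mono_on_hfun[OF adm1]])
      (auto intro!: linearI simp: add_divide_distrib)
  then have "concave_on ?S (inner i)" for i
    unfolding inner_def[abs_def] using M_nonneg convex_S
    by (auto intro!: concave_on_weighted_sum)
  moreover have "0 \<le> inner i f" if "f \<in> ?S" for i f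
    unfolding inner_def using that M_nonneg hfun_nonneg[OF adm1]
    by (auto intro!: sum_nonneg)
  ultimately have "concave_on ?S (\<lambda>f. ?h2 (1 / ((\<Sum>j\<in>UNIV. M $ i $ j) * s2\<^sup>2) * inner i f))" for i
    using row_sum_nonneg
    by (intro concave_on_compose_mono[OF _ concave_on_hfun[OF adm2] mono_on_hfun[OF adm2]]) auto
  then show ?thesis
    unfolding cellL_def[abs_def] Let_def inner_def[symmetric]
    by (intro concave_on_cmul concave_on_weighted_sum) (simp_all add: row_sum_nonneg convex_S sum_nonneg)
qed

end
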